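(* Let $K\ge 2$, let $\mathcal{D}$ be a probability distribution on $\mathcal{X}\times\mathcal{Y}$ with $\mathcal{Y}=\{1,\dots,K\}$, and let $\rho$ be a probability distribution over classifiers $h:\mathcal{X}\to\mathcal{Y}$. Let $W_\rho(X,Y)=\mathbb{E}_{h\sim\rho}[\mathbb{1}(h(X)\neq Y)]$ for $(X,Y)\sim\mathcal{D}$. Suppose $\rho$ is competent, i.e. for every $0\le t\le 1/2$, $$\mathbb{P}_{\mathcal{D}}\big(W_\rho\in[t,1/2)\big)\;\ge\;\mathbb{P}_{\mathcal{D}}\big(W_\rho\in[1/2,1-t]\big),$$ and suppose $\mathbb{E}_{h\sim\rho}[L(h)]\neq 0$. Then $$\mathrm{DER}\;\ge\;\mathrm{EIR}\;\ge\;\frac{2(K-1)}{K}\,\mathrm{DER}-\frac{3K-4}{K}.$$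
   Context: The error rate of a classifier is $L(h)=\mathbb{E}_{(X,Y)\sim\mathcal{D}}[\mathbb{1}(h(X)\neq Y)]$. The majority vote classifier is $h_{\mathrm{MV}}(x)=\arg\max_j \mathbb{E}_{h\sim\rho}[\mathbb{1}(h(x)=j)]$ (ties broken arbitrarily). The disagreement rate of two classifiers is $D(h,h')=\mathbb{E}_{X\sim\mathcal{D}}[\mathbb{1}(h(X)\neq h'(X))]$, and the expected disagreement is $\mathbb{E}_{h,h'\sim\rho}[D(h,h')]$ with $h,h'$ drawn independently from $\rho$. The ensemble improvement rate is $\mathrm{EIR}=\big(\mathbb{E}_{h\sim\rho}[L(h)]-L(h_{\mathrm{MV}})\big)/\mathbb{E}_{h\sim\rho}[L(h)]$ and the disagreement-error ratio is $\mathrm{DER}=\mathbb{E}_{h,h'\sim\rho}[D(h,h')]/\mathbb{E}_{h\sim\rho}[L(h)]$. *)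

theory Defs
  imports "HOL-Probability.Probability"
begin

text \<open>D : distribution on X \<times> Y (labels are naturals in {1..K}).
  rho : distribution over an index space 'h; clf c is the classifier indexed by c.\<close>

definition err :: "('x \<times> nat) measure \<Rightarrow> ('x \<Rightarrow> nat) \<Rightarrow> real" where
  "err D h = measure D {z \<in> space D. h (fst z) \<noteq> snd z}"

definition dis :: "('x \<times> nat) measure \<Rightarrow> ('x \<Rightarrow> nat) \<Rightarrow> ('x \<Rightarrow> nat) \<Rightarrow> real" where
  "dis D h h' = measure D {z \<in> space D. h (fst z) \<noteq> h' (fst z)}"

definition W_rho :: "'h measure \<Rightarrow> ('h \<Rightarrow> 'x \<Rightarrow> nat) \<Rightarrow> ('x \<times> nat) \<Rightarrow> real" where
  "W_rho rho clf z = measure rho {c \<in> space rho. clf c (fst z) \<noteq> snd z}"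

definition exp_err :: "('x \<times> nat) measure \<Rightarrow> 'h measure \<Rightarrow> ('h \<Rightarrow> 'x \<Rightarrow> nat) \<Rightarrow> real" where
  "exp_err D rho clf = (\<integral>c. err D (clf c) \<partial>rho)"

definition exp_dis :: "('x \<times> nat) measure \<Rightarrow> 'h measure \<Rightarrow> ('h \<Rightarrow> 'x \<Rightarrow> nat) \<Rightarrow> real" where
  "exp_dis D rho clf = (\<integral>c. (\<integral>c'. dis D (clf c) (clf c') \<partial>rho) \<partial>rho)"

definition is_majority_vote :: "nat \<Rightarrow> 'h measure \<Rightarrow> ('h \<Rightarrow> 'x \<Rightarrow> nat) \<Rightarrow> ('x \<Rightarrow> nat) \<Rightarrow> bool" where
  "is_majority_vote K rho clf hMV \<longleftrightarrow>
     (\<forall>x. hMV x \<in> {1..K} \<and>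
        (\<forall>j\<in>{1..K}. measure rho {c \<in> space rho. clf c x = j}
                     \<le> measure rho {c \<in> space rho. clf c x = hMV x}))"

definition EIR :: "('x \<times> nat) measure \<Rightarrow> 'h measure \<Rightarrow> ('h \<Rightarrow> 'x \<Rightarrow> nat) \<Rightarrow> ('x \<Rightarrow> nat) \<Rightarrow> real" where
  "EIR D rho clf hMV = (exp_err D rho clf - err D hMV) / exp_err D rho clf"

definition DER :: "('x \<times> nat) measure \<Rightarrow> 'h measure \<Rightarrow> ('h \<Rightarrow> 'x \<Rightarrow> nat) \<Rightarrow> real" where
  "DER D rho clf = exp_dis D rho clf / exp_err D rho clf"

definition competent :: "('x \<times> nat) measure \<Rightarrow> 'h measure \<Rightarrow> ('h \<Rightarrow> 'x \<Rightarrow> nat) \<Rightarrow> bool" where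
  "competent D rho clf \<longleftrightarrow>
     (\<forall>t::real. 0 \<le> t \<and> t \<le> 1/2 \<longrightarrow>
        measure D {z \<in> space D. W_rho rho clf z \<in> {t..<1/2}}
        \<ge> measure D {z \<in> space D. W_rho rho clf z \<in> {1/2..1-t}})"

end

theory Submission
  imports Defs
begin

(* With p_j(x) the rho-mass of classifiers voting j at x and W = 1 - p_Y, Fubini gives
   E L(h) = E W and E D(h,h') = E (1 - sum_j p_j^2), while L(h_MV) = P(h_MV(X) <> Y).
   Pointwise, sum_j p_j^2 <= max_j p_j, so W <= (1 - sum_j p_j^2) + 1(h_MV <> Y); integrating gives
   DER >= EIR.  Cauchy-Schwarz over the K - 1 wrong labels gives K W^2 <= (K-1)(2W - (1 - sum_j p_j^2)).
   If the vote errs then p_Y <= 1/2, so 1(h_MV <> Y) <= 2 (W^2 + (1-W)^2) 1(W >= 1/2).  Competence says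
   exactly that W 1(W < 1/2) stochastically dominates (1-W) 1(W >= 1/2), hence
   E[(1-W)^2 1(W >= 1/2)] <= E[W^2 1(W < 1/2)] and L(h_MV) <= 2 E W^2 <= 2(K-1)/K (2 E W - E D),
   which rearranges to the lower bound on EIR. *)

lemma measure_eq_integral_of_bool:
  "measure M {x \<in> space M. P x} = (\<integral>x. of_bool (P x) \<partial>M)"
proof -
  have "measure M {x \<in> space M. P x} = (\<integral>x. indicator {x \<in> space M. P x} x \<partial>M)"
    by (simp add: Int_absorb2)
  also have "\<dots> = (\<integral>x. of_bool (P x) \<partial>M)"
    by (rule Bochner_Integration.integral_cong) (auto simp: indicator_def)
  finally show ?thesis .
qed

lemma pred_count_space_eq [measurable (raw)]:
  fixes f g :: "'a \<Rightarrow> 'b::countable"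
  assumes "f \<in> measurable M (count_space UNIV)" "g \<in> measurable M (count_space UNIV)"
  shows "Measurable.pred M (\<lambda>x. f x = g x)"
  using measurable_compose_countable'[where f="\<lambda>b x. f x = b" and g=g and I=UNIV] assms
  by measurable

lemma (in finite_measure) integral_finite_valued:
  fixes f :: "'b \<Rightarrow> real"
  assumes [measurable]: "g \<in> measurable M (count_space UNIV)"
    and S: "finite S" "\<And>x. x \<in> space M \<Longrightarrow> g x \<in> S"
  shows "(\<integral>x. f (g x) \<partial>M) = (\<Sum>j\<in>S. f j * measure M {x \<in> space M. g x = j})"
proof -
  have "(\<integral>x. f (g x) \<partial>M) = (\<integral>x. (\<Sum>j\<in>S. f j * of_bool (g x = j)) \<partial>M)"
    using S by (intro Bochner_Integration.integral_cong) (auto simp: sum.If_cases)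
  also have "\<dots> = (\<Sum>j\<in>S. f j * measure M {x \<in> space M. g x = j})"
    by (subst Bochner_Integration.integral_sum)
       (auto simp: measure_eq_integral_of_bool intro!: integrable_const_bound[where B=1])
  finally show ?thesis .
qed

lemma (in finite_measure) integrable_real_bounded:
  fixes f :: "'a \<Rightarrow> real"
  assumes "f \<in> borel_measurable M" and "\<And>x. x \<in> space M \<Longrightarrow> \<bar>f x\<bar> \<le> B"
  shows "integrable M f"
  using assms by (intro integrable_const_bound[where B=B]) (auto intro: AE_I2)

lemma (in pair_prob_space) Fubini_integral_bounded:
  fixes f :: "'a \<Rightarrow> 'b \<Rightarrow> real"
  assumes "case_prod f \<in> borel_measurable (M1 \<Otimes>\<^sub>M M2)" and "\<And>x y. \<bar>f x y\<bar> \<le> B"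
  shows "(\<integral>y. (\<integral>x. f x y \<partial>M1) \<partial>M2) = (\<integral>x. (\<integral>y. f x y \<partial>M2) \<partial>M1)"
  using assms by (intro Fubini_integral P.integrable_const_bound[where B=B]) auto

lemma nn_integral_ramp_eq_square:
  fixes u :: real
  assumes "0 \<le> u"
  shows "(\<integral>\<^sup>+t. ennreal (2 * t) * indicator {0..u} t \<partial>lborel) = ennreal (u\<^sup>2)"
proof -
  have "(\<integral>\<^sup>+t. ennreal (2 * t) * indicator {0..u} t \<partial>lborel) = ennreal (u\<^sup>2 - 0\<^sup>2)"
    using assms by (intro nn_integral_FTC_Icc) (auto intro!: derivative_eq_intros)
  then show ?thesis by simp
qed

lemma (in sigma_finite_measure) nn_integral_square_eq_tail:
  fixes F :: "'a \<Rightarrow> real"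
  assumes [measurable]: "F \<in> borel_measurable M" and nonneg: "\<And>x. x \<in> space M \<Longrightarrow> 0 \<le> F x"
  shows "(\<integral>\<^sup>+x. ennreal ((F x)\<^sup>2) \<partial>M) =
    (\<integral>\<^sup>+t. ennreal (2 * t) * indicator {0..} t * emeasure M {x \<in> space M. t \<le> F x} \<partial>lborel)"
proof -
  interpret P: pair_sigma_finite M lborel
    by (intro pair_sigma_finite.intro sigma_finite_measure_axioms lborel.sigma_finite_measure_axioms)
  have "(\<integral>\<^sup>+x. ennreal ((F x)\<^sup>2) \<partial>M) =
      (\<integral>\<^sup>+x. (\<integral>\<^sup>+t. ennreal (2 * t) * indicator {0..F x} t \<partial>lborel) \<partial>M)"
    using nonneg by (intro nn_integral_cong) (simp add: nn_integral_ramp_eq_square)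
  also have "\<dots> = (\<integral>\<^sup>+t. (\<integral>\<^sup>+x. ennreal (2 * t) * indicator {0..F x} t \<partial>M) \<partial>lborel)"
  proof (rule P.Fubini'[symmetric])
    show "(\<lambda>(x, t). ennreal (2 * t) * indicator {0..F x} t) \<in> borel_measurable (M \<Otimes>\<^sub>M lborel)"
      unfolding indicator_def atLeastAtMost_iff by measurable
  qed
  also have "\<dots> = (\<integral>\<^sup>+t. ennreal (2 * t) * indicator {0..} t * emeasure M {x \<in> space M. t \<le> F x} \<partial>lborel)"
  proof (intro nn_integral_cong)
    fix t :: real
    have "(\<integral>\<^sup>+x. ennreal (2 * t) * indicator {0..F x} t \<partial>M) =
        (\<integral>\<^sup>+x. ennreal (2 * t) * indicator {0..} t * indicator {x \<in> space M. t \<le> F x} x \<partial>M)"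
      by (intro nn_integral_cong) (auto simp: indicator_def)
    then show "(\<integral>\<^sup>+x. ennreal (2 * t) * indicator {0..F x} t \<partial>M) =
        ennreal (2 * t) * indicator {0..} t * emeasure M {x \<in> space M. t \<le> F x}"
      by (simp add: nn_integral_cmult_indicator)
  qed
  finally show ?thesis .
qed

lemma (in sigma_finite_measure) nn_integral_square_mono_tail:
  fixes U V :: "'a \<Rightarrow> real"
  assumes "U \<in> borel_measurable M" "V \<in> borel_measurable M"
    and "\<And>x. x \<in> space M \<Longrightarrow> 0 \<le> U x" "\<And>x. x \<in> space M \<Longrightarrow> 0 \<le> V x"
    and tail: "\<And>t. 0 < t \<Longrightarrow> emeasure M {x \<in> space M. t \<le> U x} \<le> emeasure M {x \<in> space M. t \<le> V x}"
  shows "(\<integral>\<^sup>+x. ennreal ((U x)\<^sup>2) \<partial>M) \<le> (\<integral>\<^sup>+x. ennreal ((V x)\<^sup>2) \<partial>M)"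
proof -
  have "(\<integral>\<^sup>+x. ennreal ((U x)\<^sup>2) \<partial>M) =
      (\<integral>\<^sup>+t. ennreal (2 * t) * indicator {0..} t * emeasure M {x \<in> space M. t \<le> U x} \<partial>lborel)"
    using assms by (intro nn_integral_square_eq_tail)
  also have "\<dots> \<le> (\<integral>\<^sup>+t. ennreal (2 * t) * indicator {0..} t * emeasure M {x \<in> space M. t \<le> V x} \<partial>lborel)"
  proof (intro nn_integral_mono)
    fix t :: real
    show "ennreal (2 * t) * indicator {0..} t * emeasure M {x \<in> space M. t \<le> U x}
        \<le> ennreal (2 * t) * indicator {0..} t * emeasure M {x \<in> space M. t \<le> V x}"
      using tail[of t] by (cases "0 < t") (auto intro: mult_left_mono simp: ennreal_neg)
  qed
  also have "\<dots> = (\<integral>\<^sup>+x. ennreal ((V x)\<^sup>2) \<partial>M)"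
    using assms by (intro nn_integral_square_eq_tail[symmetric])
  finally show ?thesis .
qed

lemma (in prob_space) competent_tail_square_le:
  fixes W :: "'a \<Rightarrow> real"
  assumes [measurable]: "W \<in> borel_measurable M"
    and W01: "\<And>z. z \<in> space M \<Longrightarrow> 0 \<le> W z \<and> W z \<le> 1"
    and comp: "\<And>t. 0 \<le> t \<Longrightarrow> t \<le> 1/2 \<Longrightarrow>
      prob {z \<in> space M. W z \<in> {1/2..1-t}} \<le> prob {z \<in> space M. W z \<in> {t..<1/2}}"
  shows "(\<integral>z. (if 1/2 \<le> W z then (1 - W z)\<^sup>2 else 0) \<partial>M) \<le> (\<integral>z. (if W z < 1/2 then (W z)\<^sup>2 else 0) \<partial>M)"
proof -
  define U where "U z = (if 1/2 \<le> W z then 1 - W z else 0)" for z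
  define V where "V z = (if W z < 1/2 then W z else 0)" for z
  have U01: "0 \<le> U z \<and> U z \<le> 1" and V01: "0 \<le> V z \<and> V z \<le> 1" if "z \<in> space M" for z
    using W01[OF that] by (auto simp: U_def V_def)
  have [measurable]: "U \<in> borel_measurable M" "V \<in> borel_measurable M"
    unfolding U_def V_def by measurable
  have "emeasure M {z \<in> space M. t \<le> U z} \<le> emeasure M {z \<in> space M. t \<le> V z}" if "0 < t" for t
  proof (cases "t \<le> 1/2")
    case True
    have "{z \<in> space M. t \<le> U z} = {z \<in> space M. W z \<in> {1/2..1-t}}"
      "{z \<in> space M. t \<le> V z} = {z \<in> space M. W z \<in> {t..<1/2}}"
      using that True by (auto simp: U_def V_def)
    then show ?thesis
      using comp[of t] that True by (simp add: emeasure_eq_measure)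
  next
    case False
    then have "{z \<in> space M. t \<le> U z} = {}"
      using W01 by (auto simp: U_def)
    then show ?thesis by (metis emeasure_empty zero_le)
  qed
  then have "(\<integral>\<^sup>+z. ennreal ((U z)\<^sup>2) \<partial>M) \<le> (\<integral>\<^sup>+z. ennreal ((V z)\<^sup>2) \<partial>M)"
    using U01 V01 by (intro nn_integral_square_mono_tail) auto
  moreover have "integrable M (\<lambda>z. (U z)\<^sup>2)" "integrable M (\<lambda>z. (V z)\<^sup>2)"
    using U01 V01 by (auto intro!: integrable_const_bound[where B=1] simp: abs_square_le_1)
  ultimately have "(\<integral>z. (U z)\<^sup>2 \<partial>M) \<le> (\<integral>z. (V z)\<^sup>2 \<partial>M)"
    by (simp add: nn_integral_eq_integral)
  moreover have "(U z)\<^sup>2 = (if 1/2 \<le> W z then (1 - W z)\<^sup>2 else 0)"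
    "(V z)\<^sup>2 = (if W z < 1/2 then (W z)\<^sup>2 else 0)" for z
    by (simp_all add: U_def V_def)
  ultimately show ?thesis by simp
qed

definition gini_impurity :: "('a \<Rightarrow> real) \<Rightarrow> 'a set \<Rightarrow> real" where
  "gini_impurity q S = 1 - (\<Sum>j\<in>S. (q j)\<^sup>2)"

lemma one_minus_mode_le_gini_impurity:
  fixes q :: "'a \<Rightarrow> real"
  assumes nonneg: "\<And>j. j \<in> S \<Longrightarrow> 0 \<le> q j" and sum: "sum q S = 1"
    and mode: "\<And>j. j \<in> S \<Longrightarrow> q j \<le> q m"
  shows "1 - q m \<le> gini_impurity q S"
proof -
  have "(\<Sum>j\<in>S. (q j)\<^sup>2) \<le> (\<Sum>j\<in>S. q j * q m)"
    using nonneg mode by (intro sum_mono) (simp add: power2_eq_square mult_left_mono)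
  also have "\<dots> = q m"
    using sum by (simp add: sum_distrib_right[symmetric])
  finally show ?thesis by (simp add: gini_impurity_def)
qed

lemma gini_impurity_nonneg:
  fixes q :: "'a \<Rightarrow> real"
  assumes nonneg: "\<And>j. j \<in> S \<Longrightarrow> 0 \<le> q j" and sum: "sum q S = 1"
  shows "0 \<le> gini_impurity q S"
proof -
  have fin: "finite S"
    using sum by (metis sum.infinite zero_neq_one)
  have "q j \<le> 1" if "j \<in> S" for j
    using member_le_sum[of j S q] that nonneg fin sum by auto
  then have "(\<Sum>j\<in>S. (q j)\<^sup>2) \<le> sum q S"
    using nonneg by (intro sum_mono) (simp add: power2_eq_square mult_left_le)
  then show ?thesis using sum by (simp add: gini_impurity_def)
qed

lemma error_le_gini_impurity_plus_mode_error:
  fixes q :: "'a \<Rightarrow> real"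
  assumes nonneg: "\<And>j. j \<in> S \<Longrightarrow> 0 \<le> q j" and sum: "sum q S = 1"
    and mode: "\<And>j. j \<in> S \<Longrightarrow> q j \<le> q m" and y: "y \<in> S"
  shows "1 - q y \<le> gini_impurity q S + of_bool (m \<noteq> y)"
proof (cases "m = y")
  case True
  then show ?thesis using one_minus_mode_le_gini_impurity[OF nonneg sum mode] by simp
next
  case False
  then show ?thesis using gini_impurity_nonneg[OF nonneg sum] nonneg[OF y] by simp
qed

lemma card_mult_error_square_le:
  fixes q :: "'a \<Rightarrow> real"
  assumes fin: "finite S" and sum: "sum q S = 1" and y: "y \<in> S"
  shows "card S * (1 - q y)\<^sup>2 \<le> (real (card S) - 1) * (2 * (1 - q y) - gini_impurity q S)"
proof -
  have "(\<Sum>j\<in>S - {y}. q j) = 1 - q y"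
    using sum fin y sum.remove[of S y q] by simp
  then have "(1 - q y)\<^sup>2 = (\<Sum>j\<in>S - {y}. q j)\<^sup>2"
    by simp
  also have "\<dots> \<le> (\<Sum>j\<in>S - {y}. (q j)\<^sup>2) * card (S - {y})"
    by (rule sum_squared_le_sum_of_squares)
  also have "real (card (S - {y})) = real (card S) - 1"
    using fin y card_gt_0_iff[of S] by (auto simp: Suc_leI of_nat_diff)
  finally have cs: "(1 - q y)\<^sup>2 \<le> (real (card S) - 1) * (\<Sum>j\<in>S - {y}. (q j)\<^sup>2)"
    by (simp add: mult.commute)
  have "(\<Sum>j\<in>S. (q j)\<^sup>2) = (q y)\<^sup>2 + (\<Sum>j\<in>S - {y}. (q j)\<^sup>2)"
    using fin y by (simp add: sum.remove)
  then have gini: "2 * (1 - q y) - gini_impurity q S = (1 - q y)\<^sup>2 + (\<Sum>j\<in>S - {y}. (q j)\<^sup>2)"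
    by (simp add: gini_impurity_def power2_eq_square algebra_simps)
  have "card S * (1 - q y)\<^sup>2 = (real (card S) - 1) * (1 - q y)\<^sup>2 + (1 - q y)\<^sup>2"
    by (simp add: algebra_simps)
  also have "\<dots> \<le> (real (card S) - 1) * ((1 - q y)\<^sup>2 + (\<Sum>j\<in>S - {y}. (q j)\<^sup>2))"
    using cs by (simp add: distrib_left)
  finally show ?thesis
    unfolding gini .
qed

lemma le_half_if_le_other:
  fixes q :: "'a \<Rightarrow> real"
  assumes nonneg: "\<And>j. j \<in> S \<Longrightarrow> 0 \<le> q j" and sum: "sum q S = 1"
    and y: "y \<in> S" and m: "m \<in> S" and "m \<noteq> y" and "q y \<le> q m"
  shows "q y \<le> 1/2"
proof -
  have fin: "finite S"
    using sum by (metis sum.infinite zero_neq_one)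
  have "sum q {y, m} \<le> sum q S"
    using y m nonneg fin by (intro sum_mono2) auto
  then show ?thesis using assms by simp
qed

locale ensemble =
  D: prob_space D + R: prob_space rho
  for D :: "('x \<times> nat) measure" and rho :: "'h measure" and clf :: "'h \<Rightarrow> 'x \<Rightarrow> nat" and K :: nat +
  assumes labels: "\<And>z. z \<in> space D \<Longrightarrow> snd z \<in> {1..K}"
    and clf_range: "\<And>c x. clf c x \<in> {1..K}"
    and measurable_label [measurable]: "snd \<in> measurable D (count_space UNIV)"
    and measurable_clf_pair: "(\<lambda>(c, z). clf c (fst z)) \<in> measurable (rho \<Otimes>\<^sub>M D) (count_space UNIV)"
begin

sublocale P: pair_prob_space rho D ..

lemma measurable_clf [measurable]:
  "(\<lambda>p. clf (fst p) (fst (snd p))) \<in> measurable (rho \<Otimes>\<^sub>M D) (count_space UNIV)"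
  using measurable_clf_pair by (simp add: split_beta')

lemma measurable_clf_swap [measurable]:
  "(\<lambda>p. clf (snd p) (fst (fst p))) \<in> measurable (D \<Otimes>\<^sub>M rho) (count_space UNIV)"
  using measurable_compose[OF measurable_pair_swap' measurable_clf_pair] by (simp add: split_beta')

lemma measurable_clf_at_classifier:
  "c \<in> space rho \<Longrightarrow> (\<lambda>z. clf c (fst z)) \<in> measurable D (count_space UNIV)"
  using measurable_compose[OF measurable_Pair1' measurable_clf] by simp

lemma measurable_clf_at_point:
  "z \<in> space D \<Longrightarrow> (\<lambda>c. clf c (fst z)) \<in> measurable rho (count_space UNIV)"
  using measurable_compose[OF measurable_Pair2' measurable_clf] by simp

(* Indexed by the sample z rather than by the point fst z: measurability of c \<mapsto> clf c x is only
   available for x = fst z with z \<in> space D. *)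
definition share :: "nat \<Rightarrow> 'x \<times> nat \<Rightarrow> real" where
  "share j z = measure rho {c \<in> space rho. clf c (fst z) = j}"

lemma share_nonneg: "0 \<le> share j z"
  by (simp add: share_def)

lemma share_le_1: "share j z \<le> 1"
  by (simp add: share_def)

lemma measurable_share [measurable]: "share j \<in> borel_measurable D"
proof -
  have "(\<lambda>z. \<integral>c. of_bool (clf c (fst z) = j) \<partial>rho :: real) \<in> borel_measurable D"
    by measurable
  moreover have "share j = (\<lambda>z. \<integral>c. of_bool (clf c (fst z) = j) \<partial>rho)"
    by (simp add: fun_eq_iff share_def measure_eq_integral_of_bool)
  ultimately show ?thesis
    by simp
qed

lemma sum_share:
  assumes "z \<in> space D" shows "(\<Sum>j\<in>{1..K}. share j z) = 1"
  using R.integral_finite_valued[OF measurable_clf_at_point[OF assms], of "{1..K}" "\<lambda>_. 1"] clf_range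
  by (simp add: share_def R.prob_space)

lemma measure_clf_neq:
  assumes "z \<in> space D"
  shows "measure rho {c \<in> space rho. clf c (fst z) \<noteq> j} = 1 - share j z"
proof -
  have "{c \<in> space rho. clf c (fst z) = j} \<in> R.events"
    using measurable_clf_at_point[OF assms] by measurable
  then show ?thesis
    unfolding share_def by (subst R.prob_compl[symmetric]) (auto intro: arg_cong[where f = R.prob])
qed

lemma W_rho_eq_share: "z \<in> space D \<Longrightarrow> W_rho rho clf z = 1 - share (snd z) z"
  by (simp add: W_rho_def measure_clf_neq)

lemma measurable_W_rho [measurable]: "W_rho rho clf \<in> borel_measurable D"
proof -
  have "(\<lambda>z. 1 - share (snd z) z) \<in> borel_measurable D"
    by measurable
  then show ?thesis
    by (rule measurable_cong[THEN iffD1, rotated]) (simp add: W_rho_eq_share)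
qed

lemma exp_err_eq_integral_W_rho: "exp_err D rho clf = (\<integral>z. W_rho rho clf z \<partial>D)"
proof -
  have "exp_err D rho clf = (\<integral>c. (\<integral>z. of_bool (clf c (fst z) \<noteq> snd z) \<partial>D) \<partial>rho)"
    by (simp add: exp_err_def err_def measure_eq_integral_of_bool)
  also have "\<dots> = (\<integral>z. (\<integral>c. of_bool (clf c (fst z) \<noteq> snd z) \<partial>rho) \<partial>D)"
    by (rule P.Fubini_integral_bounded[where B=1, symmetric]) auto
  also have "\<dots> = (\<integral>z. W_rho rho clf z \<partial>D)"
    by (simp add: W_rho_def measure_eq_integral_of_bool)
  finally show ?thesis .
qed

lemma integral_disagreement_with:
  assumes c: "c \<in> space rho"
  shows "(\<integral>c'. dis D (clf c) (clf c') \<partial>rho) = (\<integral>z. 1 - share (clf c (fst z)) z \<partial>D)"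
proof -
  note [measurable] = measurable_clf_at_classifier[OF c]
  have "(\<integral>c'. dis D (clf c) (clf c') \<partial>rho) =
      (\<integral>c'. (\<integral>z. of_bool (clf c' (fst z) \<noteq> clf c (fst z)) \<partial>D) \<partial>rho)"
    by (simp add: dis_def measure_eq_integral_of_bool eq_commute)
  also have "\<dots> = (\<integral>z. (\<integral>c'. of_bool (clf c' (fst z) \<noteq> clf c (fst z)) \<partial>rho) \<partial>D)"
    by (rule P.Fubini_integral_bounded[where B=1, symmetric]) auto
  also have "\<dots> = (\<integral>z. 1 - share (clf c (fst z)) z \<partial>D)"
    by (intro Bochner_Integration.integral_cong)
      (simp_all add: measure_eq_integral_of_bool[symmetric] measure_clf_neq)
  finally show ?thesis .
qed

lemma exp_dis_eq_integral_gini_impurity: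
  "exp_dis D rho clf = (\<integral>z. gini_impurity (\<lambda>j. share j z) {1..K} \<partial>D)"
proof -
  have "exp_dis D rho clf = (\<integral>c. (\<integral>z. 1 - share (clf c (fst z)) z \<partial>D) \<partial>rho)"
    unfolding exp_dis_def by (intro Bochner_Integration.integral_cong) (simp_all add: integral_disagreement_with)
  also have "\<dots> = (\<integral>z. (\<integral>c. 1 - share (clf c (fst z)) z \<partial>rho) \<partial>D)"
    using share_nonneg share_le_1 by (intro P.Fubini_integral_bounded[where B=1, symmetric]) auto
  also have "\<dots> = (\<integral>z. gini_impurity (\<lambda>j. share j z) {1..K} \<partial>D)"
  proof (intro Bochner_Integration.integral_cong refl)
    fix z assume z: "z \<in> space D"
    have "(\<integral>c. 1 - share (clf c (fst z)) z \<partial>rho) = (\<Sum>j\<in>{1..K}. (1 - share j z) * share j z)"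
      using R.integral_finite_valued[OF measurable_clf_at_point[OF z], of "{1..K}" "\<lambda>j. 1 - share j z"] clf_range
      by (simp add: share_def[symmetric])
    also have "\<dots> = gini_impurity (\<lambda>j. share j z) {1..K}"
      using sum_share[OF z]
      by (simp add: gini_impurity_def left_diff_distrib sum_subtractf power2_eq_square)
    finally show "(\<integral>c. 1 - share (clf c (fst z)) z \<partial>rho) = gini_impurity (\<lambda>j. share j z) {1..K}" .
  qed
  finally show ?thesis .
qed

abbreviation disagreement :: "'x \<times> nat \<Rightarrow> real" where
  "disagreement z \<equiv> gini_impurity (\<lambda>j. share j z) {1..K}"

lemma measurable_disagreement [measurable]: "disagreement \<in> borel_measurable D"
  unfolding gini_impurity_def by measurable

lemma W_rho_bounds: "z \<in> space D \<Longrightarrow> 0 \<le> W_rho rho clf z \<and> W_rho rho clf z \<le> 1"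
  using share_nonneg share_le_1 by (simp add: W_rho_eq_share)

lemma disagreement_bounds: "z \<in> space D \<Longrightarrow> 0 \<le> disagreement z \<and> disagreement z \<le> 1"
  using gini_impurity_nonneg[OF share_nonneg sum_share] by (simp add: gini_impurity_def sum_nonneg)

lemma integrable_W_rho: "integrable D (W_rho rho clf)"
  using W_rho_bounds by (intro D.integrable_real_bounded[where B=1]) auto

lemma integrable_disagreement: "integrable D disagreement"
  by (rule D.integrable_real_bounded[where B=1, OF measurable_disagreement]) (use disagreement_bounds in auto)

lemma share_le_majority_vote:
  assumes "is_majority_vote K rho clf hMV" and "j \<in> {1..K}"
  shows "share j z \<le> share (hMV (fst z)) z"
  using assms by (simp add: is_majority_vote_def share_def)

lemma exp_err_le_exp_dis_plus_err:
  assumes MV: "is_majority_vote K rho clf hMV"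
    and [measurable]: "(\<lambda>z. hMV (fst z)) \<in> measurable D (count_space UNIV)"
  shows "exp_err D rho clf \<le> exp_dis D rho clf + err D hMV"
proof -
  have "W_rho rho clf z \<le> disagreement z + of_bool (hMV (fst z) \<noteq> snd z)" if z: "z \<in> space D" for z
    using error_le_gini_impurity_plus_mode_error[of "{1..K}" "\<lambda>j. share j z" "hMV (fst z)" "snd z"]
      share_nonneg sum_share[OF z] share_le_majority_vote[OF MV] labels[OF z]
    by (simp add: W_rho_eq_share[OF z])
  moreover have int_err: "integrable D (\<lambda>z. of_bool (hMV (fst z) \<noteq> snd z) :: real)"
    by (intro D.integrable_real_bounded[where B=1]) auto
  ultimately have "(\<integral>z. W_rho rho clf z \<partial>D) \<le> (\<integral>z. disagreement z + of_bool (hMV (fst z) \<noteq> snd z) \<partial>D)"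
    by (intro integral_mono Bochner_Integration.integrable_add integrable_W_rho integrable_disagreement)
  then show ?thesis
    using int_err integrable_disagreement
    by (simp add: exp_err_eq_integral_W_rho exp_dis_eq_integral_gini_impurity err_def measure_eq_integral_of_bool)
qed

lemma majority_vote_error_le_twice_square:
  assumes MV: "is_majority_vote K rho clf hMV" and z: "z \<in> space D"
  defines "w \<equiv> W_rho rho clf z"
  shows "of_bool (hMV (fst z) \<noteq> snd z)
    \<le> 2 * (w\<^sup>2 + (if 1/2 \<le> w then (1 - w)\<^sup>2 else 0) - (if w < 1/2 then w\<^sup>2 else 0))"
proof (cases "hMV (fst z) = snd z")
  case True
  then show ?thesis by simp
next
  case False
  have "share (snd z) z \<le> 1/2"
    using False MV share_nonneg sum_share[OF z] labels[OF z] share_le_majority_vote[OF MV labels[OF z]]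
    by (intro le_half_if_le_other[where S="{1..K}" and m="hMV (fst z)"]) (auto simp: is_majority_vote_def)
  then have "1/2 \<le> w"
    by (simp add: w_def W_rho_eq_share[OF z])
  moreover have "0 \<le> (2 * w - 1)\<^sup>2"
    by simp
  ultimately show ?thesis
    using False by (simp add: power2_eq_square algebra_simps)
qed

lemma integrable_W_rho_square: "integrable D (\<lambda>z. (W_rho rho clf z)\<^sup>2)"
  using W_rho_bounds by (intro D.integrable_real_bounded[where B=1]) (auto simp: abs_square_le_1)

lemma integral_W_rho_square_le:
  "K * (\<integral>z. (W_rho rho clf z)\<^sup>2 \<partial>D) \<le> (real K - 1) * (2 * exp_err D rho clf - exp_dis D rho clf)"
proof -
  have "real K * (W_rho rho clf z)\<^sup>2 \<le> (real K - 1) * (2 * W_rho rho clf z - disagreement z)"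
    if z: "z \<in> space D" for z
    using card_mult_error_square_le[of "{1..K}" "\<lambda>j. share j z" "snd z"] sum_share[OF z] labels[OF z]
    by (simp add: W_rho_eq_share[OF z])
  then have "(\<integral>z. K * (W_rho rho clf z)\<^sup>2 \<partial>D)
      \<le> (\<integral>z. (real K - 1) * (2 * W_rho rho clf z - disagreement z) \<partial>D)"
    using integrable_W_rho_square integrable_W_rho integrable_disagreement by (intro integral_mono) auto
  then show ?thesis
    using integrable_W_rho_square integrable_W_rho integrable_disagreement
    by (simp add: exp_err_eq_integral_W_rho exp_dis_eq_integral_gini_impurity)
qed

lemma err_majority_vote_le_integral_square:
  assumes MV: "is_majority_vote K rho clf hMV"
    and [measurable]: "(\<lambda>z. hMV (fst z)) \<in> measurable D (count_space UNIV)"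
    and comp: "competent D rho clf"
  shows "err D hMV \<le> 2 * (\<integral>z. (W_rho rho clf z)\<^sup>2 \<partial>D)"
proof -
  let ?W = "W_rho rho clf"
  define a where "a z = (if 1/2 \<le> ?W z then (1 - ?W z)\<^sup>2 else 0)" for z
  define b where "b z = (if ?W z < 1/2 then (?W z)\<^sup>2 else 0)" for z
  have int: "integrable D a" "integrable D b" "integrable D (\<lambda>z. of_bool (hMV (fst z) \<noteq> snd z) :: real)"
    using W_rho_bounds unfolding a_def b_def
    by (auto intro!: D.integrable_real_bounded[where B=1] simp: abs_square_le_1)
  have "(\<integral>z. a z \<partial>D) \<le> (\<integral>z. b z \<partial>D)"
    using comp W_rho_bounds unfolding a_def b_def competent_def
    by (intro D.competent_tail_square_le measurable_W_rho) auto
  moreover have "(\<integral>z. of_bool (hMV (fst z) \<noteq> snd z) \<partial>D) \<le> (\<integral>z. 2 * ((?W z)\<^sup>2 + a z - b z) \<partial>D)"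
    using int integrable_W_rho_square majority_vote_error_le_twice_square[OF MV] unfolding a_def b_def
    by (intro integral_mono) auto
  ultimately show ?thesis
    using int integrable_W_rho_square by (simp add: err_def measure_eq_integral_of_bool)
qed

lemma err_majority_vote_le:
  assumes "is_majority_vote K rho clf hMV"
    and "(\<lambda>z. hMV (fst z)) \<in> measurable D (count_space UNIV)"
    and "competent D rho clf"
  shows "K * err D hMV \<le> 2 * (real K - 1) * (2 * exp_err D rho clf - exp_dis D rho clf)"
proof -
  have "K * err D hMV \<le> K * (2 * (\<integral>z. (W_rho rho clf z)\<^sup>2 \<partial>D))"
    using err_majority_vote_le_integral_square[OF assms] by (rule mult_left_mono) simp
  then show ?thesis
    using integral_W_rho_square_le by linarith
qed

end

lemma improvement_ratio_bounds:
  fixes e d m k :: real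
  assumes e: "0 < e" and k: "0 < k"
    and upper: "e \<le> d + m" and lower: "k * m \<le> 2 * (k - 1) * (2 * e - d)"
  shows "(e - m) / e \<le> d / e" and "2 * (k - 1) / k * (d / e) - (3 * k - 4) / k \<le> (e - m) / e"
proof -
  show "(e - m) / e \<le> d / e"
    using upper e by (intro divide_right_mono) auto
  have "(e - m) / e - (2 * (k - 1) / k * (d / e) - (3 * k - 4) / k)
      = (2 * (k - 1) * (2 * e - d) - k * m) / (k * e)"
    using k e by (simp add: field_simps)
  also have "\<dots> \<ge> 0"
    using lower k e by (intro divide_nonneg_pos) auto
  finally show "2 * (k - 1) / k * (d / e) - (3 * k - 4) / k \<le> (e - m) / e"
    by simp
qed

theorem theorem2:
  fixes K :: nat
    and D :: "('x \<times> nat) measure"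
    and rho :: "'h measure"
    and clf :: "'h \<Rightarrow> 'x \<Rightarrow> nat"
    and hMV :: "'x \<Rightarrow> nat"
  assumes K: "K \<ge> 2"
    and D: "prob_space D"
    and rho: "prob_space rho"
    and labels: "\<forall>z \<in> space D. snd z \<in> {1..K}"
    and clf_range: "\<forall>c x. clf c x \<in> {1..K}"
    and meas_snd: "snd \<in> measurable D (count_space UNIV)"
    and meas_clf: "(\<lambda>(c, z). clf c (fst z)) \<in> measurable (rho \<Otimes>\<^sub>M D) (count_space UNIV)"
    and meas_MV: "(\<lambda>z. hMV (fst z)) \<in> measurable D (count_space UNIV)"
    and MV: "is_majority_vote K rho clf hMV"
    and comp: "competent D rho clf"
    and nz: "exp_err D rho clf \<noteq> 0"
  shows "DER D rho clf \<ge> EIR D rho clf hMV \<and>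
         EIR D rho clf hMV \<ge> 2 * (real K - 1) / real K * DER D rho clf - (3 * real K - 4) / real K"
proof -
  interpret ensemble D rho clf K
    using D rho labels clf_range meas_snd meas_clf by (simp add: ensemble_def ensemble_axioms_def)
  have "0 \<le> exp_err D rho clf"
    unfolding exp_err_eq_integral_W_rho using W_rho_bounds by (simp add: integral_nonneg_AE)
  with nz have "0 < exp_err D rho clf"
    by simp
  from improvement_ratio_bounds[OF this _ exp_err_le_exp_dis_plus_err[OF MV meas_MV]
      err_majority_vote_le[OF MV meas_MV comp]] K
  show ?thesis
    by (simp add: DER_def EIR_def)
qed

end
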